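(* Let $X$ be a non-negative, absolutely continuous random variable with finite positive mean and cumulative distribution function $F$, let $2\leqslant m\leqslant n$ be integers, and let $X_1,\ldots,X_n$ be i.i.d. copies of $X$. For $1\leqslant j\leqslant k\leqslant m$ define the extended Gini index estimator $$\widehat{IG}_m(j,k)=\frac{(m-1)!}{(n-1)(n-2)\cdots(n-m+1)}\,\frac{\displaystyle\sum_{1\leqslant i_1<\cdots<i_m\leqslant n}\left[X_{k:\mathbf{i}}-X_{j:\mathbf{i}}\right]}{\displaystyle\sum_{i=1}^n X_i},$$ where for $\mathbf{i}=(i_1,\ldots,i_m)$, $X_{1:\mathbf{i}}\leqslant\cdots\leqslant X_{m:\mathbf{i}}$ are the order statistics of $X_{i_1},\ldots,X_{i_m}$. Let $\mathscr{L}_F(z)=\int_0^\infty e^{-zx}\,{\rm d}F(x)$ be the Laplace transform of $F$. Then, assuming the relevant expectations and improper integrals converge, for any $1\leqslant j\leqslant k\leqslant m$, $$\mathbb{E}[\widehat{IG}_m(j,k)]=\frac{n}{m}\sum_{r=k}^{m}(-1)^{r-k}\binom{r-1}{k-1}\binom{m}{r}\int_0^\infty\int_0^\infty\left\{\mathscr{L}_F^{r}(z)-\mathbb{E}^r\left[\mathds{1}_{\{X\leqslant t\}}e^{-Xz}\right]\right\}{\rm d}t\,\mathscr{L}_F^{n-r}(z)\,{\rm d}z$$ $$-\frac{n}{m}\sum_{s=j}^{m}(-1)^{s-j}\binom{s-1}{j-1}\binom{m}{s}\int_0^\infty\int_0^\infty\left\{\mathscr{L}_F^{s}(z)-\mathbb{E}^s\left[\mathds{1}_{\{X\leqslant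 t\}}e^{-Xz}\right]\right\}{\rm d}t\,\mathscr{L}_F^{n-s}(z)\,{\rm d}z.$$
   Context: $\mathbb{E}^r[\cdot]$ denotes the $r$th power of the expectation, and $\mathds{1}_A$ is the indicator of the event $A$. *)

theory Defs
  imports "HOL-Probability.Probability"
begin

definition ord_stat :: "nat \<Rightarrow> nat set \<Rightarrow> (nat \<Rightarrow> real) \<Rightarrow> real" where
  "ord_stat k I x = sort (map x (sorted_list_of_set I)) ! (k - 1)"

definition IG_hat :: "nat \<Rightarrow> nat \<Rightarrow> nat \<Rightarrow> nat \<Rightarrow> (nat \<Rightarrow> real) \<Rightarrow> real" where
  "IG_hat n m j k x =
     fact (m - 1) / (\<Prod>i\<in>{1..m-1}. real (n - i)) *
     ((\<Sum>I\<in>{I. I \<subseteq> {..<n} \<and> card I = m}. ord_stat k I x - ord_stat j I x)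
      / (\<Sum>i<n. x i))"

definition laplace_tr :: "'a measure \<Rightarrow> ('a \<Rightarrow> real) \<Rightarrow> real \<Rightarrow> real" where
  "laplace_tr M X z = (\<integral>\<omega>. exp (- z * X \<omega>) \<partial>M)"

definition trunc_laplace :: "'a measure \<Rightarrow> ('a \<Rightarrow> real) \<Rightarrow> real \<Rightarrow> real \<Rightarrow> real" where
  "trunc_laplace M X t z = (\<integral>\<omega>. indicator {..t} (X \<omega>) * exp (- X \<omega> * z) \<partial>M)"

end

theory Submission
  imports Defs
begin

(* Fix an m-subset I of the sample and 1 <= l <= m; let Y be the l-th order statistic of the
   X_i, i in I, and S the sample sum. As S > 0 almost surely,
     Y / S = int_0^oo int_0^oo 1{t < Y} exp(-z S) dt dz,
   and Tonelli moves the expectation inside. The event t < Y says that fewer than l of the X_i,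
   i in I, are <= t; splitting it according to the exact set J of those indices writes
   1{t < Y} exp(-z S) as a sum of products of functions of the independent X_i, so that
     E[1{t < Y} exp(-z S)] = (sum_{i<l} C(m,i) A^i (L - A)^(m-i)) L^(n-m)
   with L = L_F(z) and A = E[1{X <= t} exp(-X z)]. An alternating binomial identity rewrites
   this lower binomial tail as sum_{r=l..m} (-1)^(r-l) C(r-1,l-1) C(m,r) (L^r - A^r) L^(n-r).
   The estimator averages over the C(n,m) subsets I, and (m-1)! C(n,m) / ((n-1)...(n-m+1)) = n/m. *)

section \<open>Binomial identities\<close>

lemma binomial_term_alternating:
  fixes A B :: "'a::comm_ring_1"
  assumes "l \<le> m"
  shows "of_nat (m choose l) * A^l * B^(m-l)
       = (\<Sum>r=l..m. (-1)^(r-l) * of_nat (r choose l) * of_nat (m choose r) * A^r * (A+B)^(m-r))"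
proof -
  have "(\<Sum>r=l..m. (-1)^(r-l) * of_nat (r choose l) * of_nat (m choose r) * A^r * (A+B)^(m-r))
      = (\<Sum>r=l..m. of_nat (m choose l) * A^l * (of_nat ((m-l) choose (r-l)) * (-A)^(r-l) * (A+B)^((m-l)-(r-l))))"
  proof (rule sum.cong[OF refl])
    fix r assume r: "r \<in> {l..m}"
    have "(r choose l) * (m choose r) = (m choose l) * ((m-l) choose (r-l))"
      using choose_mult[of l r m] r by (simp add: mult.commute)
    then have c: "of_nat (r choose l) * of_nat (m choose r) = (of_nat (m choose l) * of_nat ((m-l) choose (r-l)) :: 'a)"
      by (simp flip: of_nat_mult)
    have "A^r = A^l * A^(r-l)" "(m-l)-(r-l) = m - r" using r by (simp_all flip: power_add)
    then show "(-1)^(r-l) * of_nat (r choose l) * of_nat (m choose r) * A^r * (A+B)^(m-r)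
      = of_nat (m choose l) * A^l * (of_nat ((m-l) choose (r-l)) * (-A)^(r-l) * (A+B)^((m-l)-(r-l)))"
      by (simp add: power_minus[of A] mult_ac flip: c)
  qed
  also have "\<dots> = of_nat (m choose l) * A^l * (\<Sum>s\<le>m-l. of_nat ((m-l) choose s) * (-A)^s * (A+B)^((m-l)-s))"
    using sum.shift_bounds_cl_nat_ivl[of "\<lambda>r. of_nat ((m-l) choose (r-l)) * (-A)^(r-l) * (A+B)^((m-l)-(r-l))" 0 l "m-l"] assms
    by (simp add: atLeast0AtMost flip: sum_distrib_left)
  also have "\<dots> = of_nat (m choose l) * A^l * B^(m-l)"
    using binomial_ring[of "-A" "A+B" "m-l"] by simp
  finally show ?thesis ..
qed

lemma binomial_upper_tail_alternating:
  fixes A B :: "'a::comm_ring_1"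
  assumes "1 \<le> l" "l \<le> m + 1"
  shows "(\<Sum>i=l..m. of_nat (m choose i) * A^i * B^(m-i))
       = (\<Sum>r=l..m. (-1)^(r-l) * of_nat ((r-1) choose (l-1)) * of_nat (m choose r) * A^r * (A+B)^(m-r))"
  using assms(2,1)
proof (induction l rule: inc_induct)
  case base
  then show ?case by simp
next
  case (step l)
  let ?t = "\<lambda>c r. (-1)^(r-l) * of_nat c * of_nat (m choose r) * A^r * (A+B)^(m-r)"
  have pascal: "?t ((r-1) choose (l-1)) r = ?t (r choose l) r - ?t ((r-1) choose l) r" if "r \<in> {l..m}" for r
  proof -
    have e: "of_nat ((r-1) choose (l-1)) = (of_nat (r choose l) - of_nat ((r-1) choose l) :: 'a)"
    proof -
      have "r choose l = ((r-1) choose (l-1)) + ((r-1) choose l)"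
        using choose_reduce_nat[of r l] that step.prems by auto
      then show ?thesis by simp
    qed
    show ?thesis unfolding e by (simp add: algebra_simps)
  qed
  have shift: "?t ((r-1) choose l) r = - ((-1)^(r-Suc l) * of_nat ((r-1) choose (Suc l - 1)) * of_nat (m choose r) * A^r * (A+B)^(m-r))"
    if "r \<in> {Suc l..m}" for r
  proof -
    have "r - l = Suc (r - Suc l)" using that by auto
    then show ?thesis by simp
  qed
  have lhs: "(\<Sum>i=l..m. of_nat (m choose i) * A^i * B^(m-i))
      = of_nat (m choose l) * A^l * B^(m-l) + (\<Sum>i=Suc l..m. of_nat (m choose i) * A^i * B^(m-i))"
    using step.hyps by (intro sum.atLeast_Suc_atMost) simp
  have "(\<Sum>r=l..m. ?t ((r-1) choose (l-1)) r) = (\<Sum>r=l..m. ?t (r choose l) r) - (\<Sum>r=l..m. ?t ((r-1) choose l) r)"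
    unfolding sum_subtractf[symmetric] by (rule sum.cong) (use pascal in auto)
  also have "(\<Sum>r=l..m. ?t (r choose l) r) = of_nat (m choose l) * A^l * B^(m-l)"
    using binomial_term_alternating[of l m A B] step.hyps by simp
  also have "(\<Sum>r=l..m. ?t ((r-1) choose l) r) = (\<Sum>r=Suc l..m. ?t ((r-1) choose l) r)"
    using step.hyps step.prems by (simp add: sum.atLeast_Suc_atMost binomial_eq_0)
  also have "\<dots> = (\<Sum>r=Suc l..m. - ((-1)^(r-Suc l) * of_nat ((r-1) choose (Suc l - 1)) * of_nat (m choose r) * A^r * (A+B)^(m-r)))"
    by (rule sum.cong[OF refl]) (rule shift)
  also have "\<dots> = - (\<Sum>i=Suc l..m. of_nat (m choose i) * A^i * B^(m-i))"
    unfolding sum_negf step.IH[OF le_SucI[OF step.prems]] ..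
  finally show ?case
    unfolding lhs diff_minus_eq_add ..
qed

lemma binomial_lower_tail_alternating:
  fixes A B :: "'a::comm_ring_1"
  assumes "1 \<le> l" "l \<le> m"
  shows "(\<Sum>i<l. of_nat (m choose i) * A^i * B^(m-i))
       = (\<Sum>r=l..m. (-1)^(r-l) * of_nat ((r-1) choose (l-1)) * of_nat (m choose r)
            * (((A+B)^r - A^r) * (A+B)^(m-r)))"
proof -
  define c :: "nat \<Rightarrow> 'a" where "c r = (-1)^(r-l) * of_nat ((r-1) choose (l-1)) * of_nat (m choose r)" for r
  have upper: "(\<Sum>i=l..m. of_nat (m choose i) * A^i * B^(m-i)) = (\<Sum>r=l..m. c r * A^r * (A+B)^(m-r))"
    unfolding c_def using binomial_upper_tail_alternating[of l m A B] assms by simp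
  have "(\<Sum>r=l..m. c r) = (\<Sum>i=l..m. of_nat (m choose i) * 1^i * (0::'a)^(m-i))"
    using binomial_upper_tail_alternating[of l m 1 "0::'a"] assms by (simp add: c_def)
  also have "\<dots> = 1"
    using assms by (simp add: zero_power sum.atLeastAtMost_shift_bounds sum.last_plus)
  finally have c_sum: "(\<Sum>r=l..m. c r) = 1" .
  have "(\<Sum>r=l..m. c r * (((A+B)^r - A^r) * (A+B)^(m-r)))
      = (\<Sum>r=l..m. c r) * (A+B)^m - (\<Sum>r=l..m. c r * A^r * (A+B)^(m-r))"
    unfolding sum_distrib_right sum_subtractf[symmetric]
    by (rule sum.cong) (auto simp: algebra_simps simp flip: power_add)
  also have "\<dots> = (\<Sum>i\<le>m. of_nat (m choose i) * A^i * B^(m-i)) - (\<Sum>i=l..m. of_nat (m choose i) * A^i * B^(m-i))"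
    unfolding c_sum upper binomial_ring[of A B m] by simp
  also have "\<dots> = (\<Sum>i<l. of_nat (m choose i) * A^i * B^(m-i))"
  proof -
    have "{..m} = {..<l} \<union> {l..m}" "{..<l} \<inter> {l..m} = {}" using assms by auto
    then show ?thesis by (simp add: sum.union_disjoint)
  qed
  finally show ?thesis unfolding c_def ..
qed

lemma prod_diff_mult_fact:
  "k < n \<Longrightarrow> (\<Prod>i=1..k. real (n - i)) * fact (n - Suc k) = fact (n - 1)"
proof (induction k)
  case 0
  then show ?case by simp
next
  case (Suc k)
  have "fact (n - Suc k) = real (n - Suc k) * fact (n - Suc (Suc k))"
    using Suc.prems fact_Suc[of "n - Suc (Suc k)"] by (simp add: Suc_diff_Suc del: of_nat_diff)
  then show ?case
    using Suc by (simp add: prod.nat_ivl_Suc' mult_ac del: of_nat_diff)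
qed

lemma fact_div_prod_times_choose:
  assumes "1 \<le> m" "m \<le> n"
  shows "fact (m - 1) / (\<Prod>i=1..m-1. real (n - i)) * real (n choose m) = real n / real m"
proof -
  have falling: "(\<Prod>i=1..m-1. real (n - i)) = fact (n - 1) / fact (n - m)"
    using prod_diff_mult_fact[of "m - 1" n] assms by (simp add: field_simps del: of_nat_diff)
  have "real (n choose m) = fact n / (fact m * fact (n - m))"
    using binomial_fact[OF assms(2)] by simp
  moreover have "(fact n :: real) = real n * fact (n - 1)" "(fact m :: real) = real m * fact (m - 1)"
    using assms by (simp_all add: fact_reduce)
  ultimately show ?thesis
    unfolding falling using assms by (simp add: field_simps del: of_nat_diff)
qed

section \<open>Order statistics and indicator expansions\<close>

lemma sorted_nth_le_iff_less_length_filter: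
  fixes xs :: "'a::linorder list"
  assumes "sorted xs" "p < length xs"
  shows "xs ! p \<le> t \<longleftrightarrow> p < length (filter (\<lambda>v. v \<le> t) xs)"
  using assms
proof (induction xs arbitrary: p)
  case Nil
  then show ?case by simp
next
  case (Cons y ys)
  show ?case
  proof (cases "y \<le> t")
    case True
    then show ?thesis
      using Cons by (cases p) auto
  next
    case False
    have "y \<le> (y # ys) ! p"
      using Cons.prems by (cases p) auto
    with False have "\<not> (y # ys) ! p \<le> t" and "filter (\<lambda>v. v \<le> t) (y # ys) = []"
      using Cons.prems by (auto simp: filter_empty_conv)
    then show ?thesis by simp
  qed
qed

lemma ord_stat_le_iff:
  fixes x :: "nat \<Rightarrow> real"
  assumes "finite I" "1 \<le> l" "l \<le> card I"
  shows "ord_stat l I x \<le> t \<longleftrightarrow> l \<le> card {i\<in>I. x i \<le> t}"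
proof -
  define xs where "xs = sort (map x (sorted_list_of_set I))"
  have "length (filter (\<lambda>v. v \<le> t) xs) = length (filter (\<lambda>i. x i \<le> t) (sorted_list_of_set I))"
    by (simp add: xs_def filter_sort filter_map comp_def)
  also have "\<dots> = card {i\<in>I. x i \<le> t}"
    using assms(1) by (simp add: distinct_length_filter Collect_conj_eq Int_commute)
  finally have "length (filter (\<lambda>v. v \<le> t) xs) = card {i\<in>I. x i \<le> t}" .
  moreover have "sorted xs" "l - 1 < length xs"
    using assms by (simp_all add: xs_def)
  ultimately show ?thesis
    using sorted_nth_le_iff_less_length_filter[of xs "l - 1" t] assms(2)
    by (simp add: ord_stat_def xs_def, arith)
qed

lemma ord_stat_in_image:
  assumes "finite I" "1 \<le> l" "l \<le> card I"
  shows "ord_stat l I x \<in> x ` I"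
proof -
  have "sort (map x (sorted_list_of_set I)) ! (l - 1) \<in> set (sort (map x (sorted_list_of_set I)))"
    using assms by (intro nth_mem) simp
  then show ?thesis
    using assms(1) by (simp add: ord_stat_def)
qed

lemma borel_measurable_ord_stat:
  assumes "finite I" "1 \<le> l" "l \<le> card I" "\<And>i. i \<in> I \<Longrightarrow> f i \<in> borel_measurable M"
  shows "(\<lambda>\<omega>. ord_stat l I (\<lambda>i. f i \<omega>)) \<in> borel_measurable M"
  unfolding borel_measurable_iff_le
proof
  fix a
  have "(\<lambda>\<omega>. \<Sum>i\<in>I. indicator {..a} (f i \<omega>) :: real) \<in> borel_measurable M"
    using assms(4) by (intro borel_measurable_sum) measurable
  then have "{\<omega> \<in> space M. real l \<le> (\<Sum>i\<in>I. indicator {..a} (f i \<omega>))} \<in> sets M"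
    by measurable
  moreover have "(\<Sum>i\<in>I. indicator {..a} (f i \<omega>)) = real (card {i\<in>I. f i \<omega> \<le> a})" for \<omega>
    using assms(1) by (simp add: indicator_def of_bool_def[symmetric] Collect_conj_eq Int_commute)
  ultimately show "{\<omega> \<in> space M. ord_stat l I (\<lambda>i. f i \<omega>) \<le> a} \<in> sets M"
    using ord_stat_le_iff[OF assms(1-3)] by simp
qed

lemma prod_of_bool:
  "finite N \<Longrightarrow> (\<Prod>i\<in>N. of_bool (P i)) = (of_bool (\<forall>i\<in>N. P i) :: 'a::comm_semiring_1)"
  by (induction N rule: finite_induct) auto

lemma of_bool_card_less_eq_sum_subsets:
  assumes "finite N" "I \<subseteq> N"
  shows "of_bool (card {i\<in>I. P i} < l)
       = (\<Sum>J | J \<subseteq> I \<and> card J < l. \<Prod>i\<in>N. of_bool (i \<in> I \<longrightarrow> (P i \<longleftrightarrow> i \<in> J)) :: 'a::comm_semiring_1)"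
proof -
  have "finite I" using assms finite_subset by blast
  have "(\<Prod>i\<in>N. of_bool (i \<in> I \<longrightarrow> (P i \<longleftrightarrow> i \<in> J))) = (of_bool (J = {i\<in>I. P i}) :: 'a)"
    if "J \<subseteq> I" for J
    using that assms by (auto simp: prod_of_bool)
  then have "(\<Sum>J | J \<subseteq> I \<and> card J < l. \<Prod>i\<in>N. of_bool (i \<in> I \<longrightarrow> (P i \<longleftrightarrow> i \<in> J)))
      = (\<Sum>J | J \<subseteq> I \<and> card J < l. of_bool (J = {i\<in>I. P i}) :: 'a)"
    by (intro sum.cong) auto
  also have "\<dots> = of_bool (card {i\<in>I. P i} < l)"
    using \<open>finite I\<close> by (simp add: of_bool_def)
  finally show ?thesis ..
qed

lemma sum_subsets_card_less:
  assumes "finite I"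
  shows "(\<Sum>J | J \<subseteq> I \<and> card J < l. f (card J)) = (\<Sum>i<l. of_nat (card I choose i) * f i)"
proof -
  have "(\<Sum>J | J \<subseteq> I \<and> card J < l. f (card J))
      = (\<Sum>i<l. \<Sum>J | J \<in> {J. J \<subseteq> I \<and> card J < l} \<and> card J = i. f (card J))"
    using assms by (intro sum.group[symmetric]) auto
  also have "\<dots> = (\<Sum>i<l. \<Sum>J | J \<subseteq> I \<and> card J = i. f i)"
    by (intro sum.cong) auto
  also have "\<dots> = (\<Sum>i<l. of_nat (card I choose i) * f i)"
    using n_subsets[OF assms] by simp
  finally show ?thesis .
qed

lemma prod_if_nested_subsets:
  assumes "finite N" "J \<subseteq> I" "I \<subseteq> N"
  shows "(\<Prod>i\<in>N. if i \<in> J then a else if i \<in> I then b else c)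
       = a ^ card J * b ^ (card I - card J) * c ^ (card N - card I)"
proof -
  let ?g = "\<lambda>i. if i \<in> J then a else if i \<in> I then b else c"
  have "finite I" "finite J" using assms by (metis finite_subset)+
  have "prod ?g N = prod ?g (N - I) * prod ?g I"
    by (rule prod.subset_diff[OF assms(3,1)])
  also have "prod ?g I = prod ?g (I - J) * prod ?g J"
    by (rule prod.subset_diff[OF assms(2) \<open>finite I\<close>])
  also have "prod ?g (N - I) = prod (\<lambda>_. c) (N - I)"
    using assms by (intro prod.cong) auto
  also have "prod ?g (I - J) = prod (\<lambda>_. b) (I - J)"
    by (intro prod.cong) auto
  also have "prod ?g J = a ^ card J"
    by simp
  finally show ?thesis
    using assms \<open>finite I\<close> \<open>finite J\<close> by (simp add: card_Diff_subset mult_ac)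
qed

section \<open>Iterated integrals\<close>

lemma set_integrable_sum:
  fixes f :: "'i \<Rightarrow> 'a \<Rightarrow> real"
  assumes "\<And>r. r \<in> R \<Longrightarrow> set_integrable M A (f r)"
  shows "set_integrable M A (\<lambda>x. \<Sum>r\<in>R. f r x)"
  using assms unfolding set_integrable_def scaleR_sum_right
  by (intro Bochner_Integration.integrable_sum) auto

lemma set_integral_sum:
  fixes f :: "'i \<Rightarrow> 'a \<Rightarrow> real"
  assumes "\<And>r. r \<in> R \<Longrightarrow> set_integrable M A (f r)"
  shows "(LINT x:A|M. (\<Sum>r\<in>R. f r x)) = (\<Sum>r\<in>R. LINT x:A|M. f r x)"
  using assms unfolding set_integrable_def set_lebesgue_integral_def scaleR_sum_right
  by (intro Bochner_Integration.integral_sum) auto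

lemma nn_integral_indicator_eq_set_integral:
  fixes f :: "'a \<Rightarrow> real"
  assumes "set_integrable M A f" "\<And>x. x \<in> A \<Longrightarrow> 0 \<le> f x"
  shows "(\<integral>\<^sup>+x. ennreal (indicator A x * f x) \<partial>M) = ennreal (LINT x:A|M. f x)"
  using assms unfolding set_lebesgue_integral_def set_integrable_def
  by (subst nn_integral_eq_integral) (auto simp: indicator_def)

lemma nn_integral_iterated_eq_set_integral:
  fixes G :: "'b \<Rightarrow> 'a \<Rightarrow> real"
  assumes "\<And>z. z \<in> A \<Longrightarrow> set_integrable N B (\<lambda>t. G t z)"
    and "\<And>t z. z \<in> A \<Longrightarrow> t \<in> B \<Longrightarrow> 0 \<le> G t z"
    and "set_integrable M A (\<lambda>z. LINT t:B|N. G t z)"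
  shows "(\<integral>\<^sup>+z. \<integral>\<^sup>+t. ennreal (indicator A z * (indicator B t * G t z)) \<partial>N \<partial>M)
       = ennreal (LINT z:A|M. LINT t:B|N. G t z)"
proof -
  have inner_nonneg: "0 \<le> (LINT t:B|N. G t z)" if "z \<in> A" for z
    using assms(2)[OF that] unfolding set_lebesgue_integral_def
    by (intro integral_nonneg_AE) (auto simp: indicator_def)
  have "(\<integral>\<^sup>+t. ennreal (indicator A z * (indicator B t * G t z)) \<partial>N)
      = ennreal (indicator A z * (LINT t:B|N. G t z))" for z
  proof (cases "z \<in> A")
    case True
    then show ?thesis
      using nn_integral_indicator_eq_set_integral[OF assms(1)[OF True]] assms(2) by simp
  qed simp
  then have "(\<integral>\<^sup>+z. \<integral>\<^sup>+t. ennreal (indicator A z * (indicator B t * G t z)) \<partial>N \<partial>M)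
      = (\<integral>\<^sup>+z. ennreal (indicator A z * (LINT t:B|N. G t z)) \<partial>M)"
    by simp
  also have "\<dots> = ennreal (LINT z:A|M. LINT t:B|N. G t z)"
    using assms(3) inner_nonneg by (rule nn_integral_indicator_eq_set_integral)
  finally show ?thesis .
qed

lemma nn_integral_layer_cake_exp:
  fixes a s :: real
  assumes "0 \<le> a" "0 < s"
  shows "(\<integral>\<^sup>+z. \<integral>\<^sup>+t. ennreal (indicator {0<..} z * indicator {0..} t * of_bool (t < a) * exp (- z * s))
            \<partial>lborel \<partial>lborel) = ennreal (a / s)"
proof -
  have "(\<integral>\<^sup>+t. ennreal (indicator {0<..} z * indicator {0..} t * of_bool (t < a) * exp (- z * s)) \<partial>lborel)
      = ennreal (indicator {0<..} z * exp (- z * s)) * ennreal a" for z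
  proof -
    have "(\<integral>\<^sup>+t. ennreal (indicator {0<..} z * indicator {0..} t * of_bool (t < a) * exp (- z * s)) \<partial>lborel)
        = (\<integral>\<^sup>+t. ennreal (indicator {0<..} z * exp (- z * s)) * indicator {0..<a} t \<partial>lborel)"
      by (intro nn_integral_cong) (auto simp: indicator_def)
    also have "\<dots> = ennreal (indicator {0<..} z * exp (- z * s)) * ennreal a"
      using assms by (simp add: nn_integral_cmult_indicator)
    finally show ?thesis .
  qed
  then have "(\<integral>\<^sup>+z. \<integral>\<^sup>+t. ennreal (indicator {0<..} z * indicator {0..} t * of_bool (t < a) * exp (- z * s))
            \<partial>lborel \<partial>lborel) = (\<integral>\<^sup>+z. ennreal (indicator {0<..} z * exp (- (z * s))) \<partial>lborel) * ennreal a"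
    by (simp add: nn_integral_multc)
  also have "(\<integral>\<^sup>+z. ennreal (indicator {0<..} z * exp (- (z * s))) \<partial>lborel) = ennreal (1 / s)"
    using nn_integral_indicator_eq_set_integral[OF integrable_I0i_exp_mscale[OF assms(2)]]
      LBINT_I0i_exp_mscale[OF assms(2)] by (simp add: interval_lebesgue_integral_0_infty)
  finally show ?thesis
    using assms by (simp flip: ennreal_mult')
qed

lemma (in sigma_finite_measure) nn_integral_divide_eq_iterated:
  assumes [measurable]: "Y \<in> borel_measurable M" "S \<in> borel_measurable M"
    and "AE \<omega> in M. 0 \<le> Y \<omega> \<and> 0 < S \<omega>"
  shows "(\<integral>\<^sup>+\<omega>. ennreal (Y \<omega> / S \<omega>) \<partial>M)
       = (\<integral>\<^sup>+z. \<integral>\<^sup>+t. \<integral>\<^sup>+\<omega>. ennreal (indicator {0<..} z * indicator {0..} t * of_bool (t < Y \<omega>) * exp (- z * S \<omega>))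
            \<partial>M \<partial>lborel \<partial>lborel)"
proof -
  interpret lborel_M: pair_sigma_finite lborel M
    by (intro pair_sigma_finite.intro lborel.sigma_finite_measure_axioms sigma_finite_measure_axioms)
  have "ennreal (Y \<omega> / S \<omega>)
      = (\<integral>\<^sup>+z. \<integral>\<^sup>+t. ennreal (indicator {0<..} z * indicator {0..} t * of_bool (t < Y \<omega>) * exp (- z * S \<omega>))
            \<partial>lborel \<partial>lborel)" if "0 \<le> Y \<omega>" "0 < S \<omega>" for \<omega>
    using that by (rule nn_integral_layer_cake_exp[symmetric])
  then have "(\<integral>\<^sup>+\<omega>. ennreal (Y \<omega> / S \<omega>) \<partial>M)
      = (\<integral>\<^sup>+\<omega>. \<integral>\<^sup>+z. \<integral>\<^sup>+t. ennreal (indicator {0<..} z * indicator {0..} t * of_bool (t < Y \<omega>) * exp (- z * S \<omega>))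
            \<partial>lborel \<partial>lborel \<partial>M)"
    using assms(3) by (intro nn_integral_cong_AE) auto
  also have "\<dots> = (\<integral>\<^sup>+z. \<integral>\<^sup>+\<omega>. \<integral>\<^sup>+t. ennreal (indicator {0<..} z * indicator {0..} t * of_bool (t < Y \<omega>) * exp (- z * S \<omega>))
            \<partial>lborel \<partial>M \<partial>lborel)"
    by (rule lborel_M.Fubini') measurable
  also have "\<dots> = (\<integral>\<^sup>+z. \<integral>\<^sup>+t. \<integral>\<^sup>+\<omega>. ennreal (indicator {0<..} z * indicator {0..} t * of_bool (t < Y \<omega>) * exp (- z * S \<omega>))
            \<partial>M \<partial>lborel \<partial>lborel)"
    by (intro nn_integral_cong lborel_M.Fubini') measurable
  finally show ?thesis .
qed

section \<open>Independent positive samples\<close>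

lemma AE_pos_if_absolutely_continuous:
  fixes X :: "'a \<Rightarrow> real"
  assumes "X \<in> borel_measurable M" "AE \<omega> in M. 0 \<le> X \<omega>"
    and "absolutely_continuous lborel (distr M borel X)"
  shows "AE \<omega> in M. 0 < X \<omega>"
proof -
  have "AE x in distr M borel X. x \<noteq> 0"
    using absolutely_continuous_AE[OF _ assms(3)] AE_lborel_singleton[of 0] by simp
  then have "AE \<omega> in M. X \<omega> \<noteq> 0"
    using assms(1) by (simp add: AE_distr_iff)
  with assms(2) show ?thesis
    by eventually_elim (simp add: less_le)
qed

locale positive_iid_sample = prob_space M for M :: "'a measure" +
  fixes X :: "'a \<Rightarrow> real" and Xs :: "nat \<Rightarrow> 'a \<Rightarrow> real" and n :: nat
  assumes X_measurable [measurable]: "X \<in> borel_measurable M"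
    and X_pos: "AE \<omega> in M. 0 < X \<omega>"
    and Xs_measurable: "\<And>i. i < n \<Longrightarrow> Xs i \<in> borel_measurable M"
    and distr_Xs: "\<And>i. i < n \<Longrightarrow> distr M borel (Xs i) = distr M borel X"
    and indep_Xs: "indep_vars (\<lambda>_. borel) Xs {..<n}"
begin

definition sample_sum :: "'a \<Rightarrow> real" where
  "sample_sum \<omega> = (\<Sum>i<n. Xs i \<omega>)"

lemma sample_sum_measurable [measurable]: "sample_sum \<in> borel_measurable M"
  unfolding sample_sum_def using Xs_measurable by (intro borel_measurable_sum) auto

lemma integral_Xs_eq:
  fixes h :: "real \<Rightarrow> real"
  assumes "i < n" "h \<in> borel_measurable borel"
  shows "(\<integral>\<omega>. h (Xs i \<omega>) \<partial>M) = (\<integral>\<omega>. h (X \<omega>) \<partial>M)"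
proof -
  have "(\<integral>\<omega>. h (Xs i \<omega>) \<partial>M) = integral\<^sup>L (distr M borel (Xs i)) h"
    using integral_distr[OF Xs_measurable[OF assms(1)] assms(2)] by simp
  also have "\<dots> = (\<integral>\<omega>. h (X \<omega>) \<partial>M)"
    using integral_distr[OF X_measurable assms(2)] distr_Xs[OF assms(1)] by simp
  finally show ?thesis .
qed

lemma AE_Xs_pos: "AE \<omega> in M. \<forall>i\<in>{..<n}. 0 < Xs i \<omega>"
proof (rule AE_finite_allI)
  fix i assume "i \<in> {..<n}"
  have "AE x in distr M borel X. 0 < x"
    using X_pos by (simp add: AE_distr_iff)
  then have "AE x in distr M borel (Xs i). 0 < x"
    using \<open>i \<in> {..<n}\<close> by (subst distr_Xs) auto
  then show "AE \<omega> in M. 0 < Xs i \<omega>"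
    using Xs_measurable \<open>i \<in> {..<n}\<close> by (simp add: AE_distr_iff)
qed simp

(* J, a subset of I, prescribes which X_i with i in I lie below t. *)
lemma integral_pattern_exp_Xs:
  assumes "i < n" "J \<subseteq> I" "0 < z"
  shows "(\<integral>\<omega>. of_bool (i \<in> I \<longrightarrow> (Xs i \<omega> \<le> t \<longleftrightarrow> i \<in> J)) * exp (- z * Xs i \<omega>) \<partial>M)
       = (if i \<in> J then trunc_laplace M X t z
          else if i \<in> I then laplace_tr M X z - trunc_laplace M X t z else laplace_tr M X z)"
proof -
  have int_exp: "integrable M (\<lambda>\<omega>. exp (- z * X \<omega>))"
    using X_pos assms(3) by (intro integrable_const_bound[where B=1]) (auto elim!: eventually_mono)
  have int_trunc: "integrable M (\<lambda>\<omega>. indicator {..t} (X \<omega>) * exp (- X \<omega> * z))"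
    using X_pos assms(3)
    by (intro integrable_const_bound[where B=1]) (auto simp: indicator_def mult.commute[of z] elim!: eventually_mono)
  have "(\<integral>\<omega>. of_bool (i \<in> I \<longrightarrow> (Xs i \<omega> \<le> t \<longleftrightarrow> i \<in> J)) * exp (- z * Xs i \<omega>) \<partial>M)
      = (\<integral>\<omega>. of_bool (i \<in> I \<longrightarrow> (X \<omega> \<le> t \<longleftrightarrow> i \<in> J)) * exp (- z * X \<omega>) \<partial>M)"
    using assms(1) by (rule integral_Xs_eq) simp
  also have "\<dots> = (if i \<in> J then trunc_laplace M X t z
          else if i \<in> I then laplace_tr M X z - trunc_laplace M X t z else laplace_tr M X z)"
  proof -
    have "(\<lambda>\<omega>. of_bool (\<not> X \<omega> \<le> t) * exp (- z * X \<omega>))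
        = (\<lambda>\<omega>. exp (- z * X \<omega>) - indicator {..t} (X \<omega>) * exp (- X \<omega> * z))"
      by (auto simp: indicator_def mult.commute[of z])
    then show ?thesis
      using int_exp int_trunc assms(2)
      by (auto simp: laplace_tr_def trunc_laplace_def indicator_def mult.commute[of z] of_bool_def)
  qed
  finally show ?thesis .
qed

lemma integral_prod_pattern_exp_Xs:
  fixes t z :: real
  assumes "J \<subseteq> I" "I \<subseteq> {..<n}" "0 < z"
  defines "f \<equiv> \<lambda>i v. of_bool (i \<in> I \<longrightarrow> (v \<le> t \<longleftrightarrow> i \<in> J)) * exp (- z * v)"
  shows "integrable M (\<lambda>\<omega>. \<Prod>i<n. f i (Xs i \<omega>))"
    and "(\<integral>\<omega>. (\<Prod>i<n. f i (Xs i \<omega>)) \<partial>M)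
       = trunc_laplace M X t z ^ card J * (laplace_tr M X z - trunc_laplace M X t z) ^ (card I - card J)
         * laplace_tr M X z ^ (n - card I)"
proof -
  have f_measurable [measurable]: "f i \<in> borel_measurable borel" for i
    unfolding f_def by measurable
  have indep: "indep_vars (\<lambda>_. borel) (\<lambda>i \<omega>. f i (Xs i \<omega>)) {..<n}"
    by (rule indep_vars_compose2[OF indep_Xs]) simp
  have integrable: "integrable M (\<lambda>\<omega>. f i (Xs i \<omega>))" if "i \<in> {..<n}" for i
  proof (rule integrable_const_bound[where B=1])
    show "AE \<omega> in M. norm (f i (Xs i \<omega>)) \<le> 1"
      using AE_Xs_pos by eventually_elim (use that assms(3) in \<open>auto simp: f_def abs_mult zero_le_mult_iff less_imp_le\<close>)
    show "(\<lambda>\<omega>. f i (Xs i \<omega>)) \<in> borel_measurable M"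
      using Xs_measurable that by (intro measurable_compose[OF _ f_measurable]) auto
  qed
  show "integrable M (\<lambda>\<omega>. \<Prod>i<n. f i (Xs i \<omega>))"
    by (rule indep_vars_integrable[OF _ indep integrable]) auto
  have "(\<integral>\<omega>. (\<Prod>i<n. f i (Xs i \<omega>)) \<partial>M) = (\<Prod>i<n. \<integral>\<omega>. f i (Xs i \<omega>) \<partial>M)"
    by (rule indep_vars_lebesgue_integral[OF _ indep integrable]) auto
  also have "\<dots> = (\<Prod>i<n. if i \<in> J then trunc_laplace M X t z
      else if i \<in> I then laplace_tr M X z - trunc_laplace M X t z else laplace_tr M X z)"
    unfolding f_def by (intro prod.cong refl integral_pattern_exp_Xs) (use assms(1,3) in auto)
  also have "\<dots> = trunc_laplace M X t z ^ card J * (laplace_tr M X z - trunc_laplace M X t z) ^ (card I - card J)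
         * laplace_tr M X z ^ (n - card I)"
    using prod_if_nested_subsets[OF _ assms(1,2)] by simp
  finally show "(\<integral>\<omega>. (\<Prod>i<n. f i (Xs i \<omega>)) \<partial>M)
       = trunc_laplace M X t z ^ card J * (laplace_tr M X z - trunc_laplace M X t z) ^ (card I - card J)
         * laplace_tr M X z ^ (n - card I)" .
qed

lemma integral_card_below_less_exp_sample_sum:
  fixes t z :: real and l :: nat
  assumes "I \<subseteq> {..<n}" "0 < z"
  defines "g \<equiv> \<lambda>\<omega>. of_bool (card {i\<in>I. Xs i \<omega> \<le> t} < l) * exp (- z * sample_sum \<omega>)"
  shows "integrable M g"
    and "(\<integral>\<omega>. g \<omega> \<partial>M) = (\<Sum>i<l. of_nat (card I choose i) * trunc_laplace M X t z ^ i
          * (laplace_tr M X z - trunc_laplace M X t z) ^ (card I - i)) * laplace_tr M X z ^ (n - card I)"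
proof -
  define f where "f J i v = of_bool (i \<in> I \<longrightarrow> (v \<le> t \<longleftrightarrow> i \<in> J)) * exp (- z * v)" for J i v
  let ?\<J> = "{J. J \<subseteq> I \<and> card J < l}"
  have "finite I"
    using assms(1) finite_nat_iff_bounded by auto
  have g_eq: "g = (\<lambda>\<omega>. \<Sum>J\<in>?\<J>. \<Prod>i<n. f J i (Xs i \<omega>))"
  proof
    fix \<omega>
    have "exp (- z * sample_sum \<omega>) = (\<Prod>i<n. exp (- z * Xs i \<omega>))"
      by (simp add: sample_sum_def sum_distrib_left exp_sum)
    moreover have "of_bool (card {i\<in>I. Xs i \<omega> \<le> t} < l)
        = (\<Sum>J\<in>?\<J>. \<Prod>i<n. of_bool (i \<in> I \<longrightarrow> (Xs i \<omega> \<le> t \<longleftrightarrow> i \<in> J)) :: real)"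
      using assms(1) by (intro of_bool_card_less_eq_sum_subsets) auto
    ultimately show "g \<omega> = (\<Sum>J\<in>?\<J>. \<Prod>i<n. f J i (Xs i \<omega>))"
      by (simp only: g_def f_def prod.distrib sum_distrib_right)
  qed
  have integrable: "integrable M (\<lambda>\<omega>. \<Prod>i<n. f J i (Xs i \<omega>))" if "J \<in> ?\<J>" for J
    using integral_prod_pattern_exp_Xs(1)[of J I z] that assms(1,2) unfolding f_def by auto
  show "integrable M g"
    unfolding g_eq using integrable by (rule Bochner_Integration.integrable_sum)
  have "(\<integral>\<omega>. g \<omega> \<partial>M) = (\<Sum>J\<in>?\<J>. \<integral>\<omega>. (\<Prod>i<n. f J i (Xs i \<omega>)) \<partial>M)"
    unfolding g_eq using integrable by (rule Bochner_Integration.integral_sum)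
  also have "\<dots> = (\<Sum>J\<in>?\<J>. trunc_laplace M X t z ^ card J
      * (laplace_tr M X z - trunc_laplace M X t z) ^ (card I - card J) * laplace_tr M X z ^ (n - card I))"
    using integral_prod_pattern_exp_Xs(2)[of _ I z] assms(1,2) unfolding f_def by (intro sum.cong) auto
  also have "\<dots> = (\<Sum>i<l. of_nat (card I choose i) * (trunc_laplace M X t z ^ i
      * (laplace_tr M X z - trunc_laplace M X t z) ^ (card I - i) * laplace_tr M X z ^ (n - card I)))"
    by (rule sum_subsets_card_less[OF \<open>finite I\<close>])
  also have "\<dots> = (\<Sum>i<l. of_nat (card I choose i) * trunc_laplace M X t z ^ i
          * (laplace_tr M X z - trunc_laplace M X t z) ^ (card I - i)) * laplace_tr M X z ^ (n - card I)"
    unfolding sum_distrib_right by (simp add: mult_ac)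
  finally show "(\<integral>\<omega>. g \<omega> \<partial>M) = (\<Sum>i<l. of_nat (card I choose i) * trunc_laplace M X t z ^ i
          * (laplace_tr M X z - trunc_laplace M X t z) ^ (card I - i)) * laplace_tr M X z ^ (n - card I)" .
qed

lemma integral_ord_stat_exceeds_exp_sample_sum:
  fixes t z :: real
  assumes "I \<subseteq> {..<n}" "card I = m" "1 \<le> l" "l \<le> m" "0 < z"
  defines "g \<equiv> \<lambda>\<omega>. of_bool (t < ord_stat l I (\<lambda>i. Xs i \<omega>)) * exp (- z * sample_sum \<omega>)"
  shows "integrable M g"
    and "(\<integral>\<omega>. g \<omega> \<partial>M) = (\<Sum>r=l..m. (-1)^(r-l) * real ((r-1) choose (l-1)) * real (m choose r)
          * ((laplace_tr M X z ^ r - trunc_laplace M X t z ^ r) * laplace_tr M X z ^ (n - r)))"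
proof -
  have "finite I" "m \<le> n"
    using assms(1,2) finite_subset card_mono[OF _ assms(1)] by fastforce+
  have "t < ord_stat l I x \<longleftrightarrow> card {i\<in>I. x i \<le> t} < l" for x
    using ord_stat_le_iff[OF \<open>finite I\<close> assms(3), of x t] assms(2,4) by (simp flip: not_le)
  then have g_eq: "g = (\<lambda>\<omega>. of_bool (card {i\<in>I. Xs i \<omega> \<le> t} < l) * exp (- z * sample_sum \<omega>))"
    by (simp add: g_def)
  show "integrable M g"
    unfolding g_eq using integral_card_below_less_exp_sample_sum(1)[OF assms(1,5)] .
  let ?L = "laplace_tr M X z" and ?A = "trunc_laplace M X t z"
  have "(\<integral>\<omega>. g \<omega> \<partial>M) = (\<Sum>i<l. of_nat (m choose i) * ?A ^ i * (?L - ?A) ^ (m - i)) * ?L ^ (n - m)"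
    unfolding g_eq using integral_card_below_less_exp_sample_sum(2)[OF assms(1,5)] assms(2) by simp
  also have "\<dots> = (\<Sum>r=l..m. (-1)^(r-l) * real ((r-1) choose (l-1)) * real (m choose r)
          * ((?L ^ r - ?A ^ r) * ?L ^ (m - r))) * ?L ^ (n - m)"
    using binomial_lower_tail_alternating[OF assms(3,4), of ?A "?L - ?A"] by simp
  also have "\<dots> = (\<Sum>r=l..m. (-1)^(r-l) * real ((r-1) choose (l-1)) * real (m choose r)
          * ((?L ^ r - ?A ^ r) * ?L ^ (n - r)))"
    unfolding sum_distrib_right
  proof (rule sum.cong[OF refl])
    fix r assume "r \<in> {l..m}"
    then have "?L ^ (m - r) * ?L ^ (n - m) = ?L ^ (n - r)"
      using \<open>m \<le> n\<close> by (simp flip: power_add)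
    then show "(-1)^(r-l) * real ((r-1) choose (l-1)) * real (m choose r) * ((?L ^ r - ?A ^ r) * ?L ^ (m - r))
        * ?L ^ (n - m) = (-1)^(r-l) * real ((r-1) choose (l-1)) * real (m choose r) * ((?L ^ r - ?A ^ r) * ?L ^ (n - r))"
      by (simp add: mult_ac)
  qed
  finally show "(\<integral>\<omega>. g \<omega> \<partial>M) = (\<Sum>r=l..m. (-1)^(r-l) * real ((r-1) choose (l-1)) * real (m choose r)
          * ((?L ^ r - ?A ^ r) * ?L ^ (n - r)))" .
qed

lemma AE_ord_stat_bounds:
  assumes "I \<subseteq> {..<n}" "1 \<le> l" "l \<le> card I"
  shows "AE \<omega> in M. 0 < ord_stat l I (\<lambda>i. Xs i \<omega>) \<and> ord_stat l I (\<lambda>i. Xs i \<omega>) \<le> sample_sum \<omega>"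
  using AE_Xs_pos
proof eventually_elim
  case (elim \<omega>)
  have "finite I"
    using assms(1) finite_subset by blast
  then obtain i where "i \<in> I" "ord_stat l I (\<lambda>i. Xs i \<omega>) = Xs i \<omega>"
    using ord_stat_in_image[OF _ assms(2,3)] by blast
  moreover have "Xs i \<omega> \<le> sample_sum \<omega>"
    unfolding sample_sum_def using elim assms(1) \<open>i \<in> I\<close> by (intro member_le_sum) (auto intro!: less_imp_le)
  ultimately show ?case
    using elim assms(1) by auto
qed

lemma ord_stat_Xs_measurable:
  assumes "I \<subseteq> {..<n}" "1 \<le> l" "l \<le> card I"
  shows "(\<lambda>\<omega>. ord_stat l I (\<lambda>i. Xs i \<omega>)) \<in> borel_measurable M"
proof (rule borel_measurable_ord_stat[OF _ assms(2,3)])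
  show "finite I"
    using assms(1) finite_subset by blast
  show "\<And>i. i \<in> I \<Longrightarrow> Xs i \<in> borel_measurable M"
    using Xs_measurable assms(1) by auto
qed

lemma integrable_ord_stat_divide_sample_sum:
  assumes "I \<subseteq> {..<n}" "1 \<le> l" "l \<le> card I"
  shows "integrable M (\<lambda>\<omega>. ord_stat l I (\<lambda>i. Xs i \<omega>) / sample_sum \<omega>)"
proof (rule integrable_const_bound[where B=1])
  note ord_stat_Xs_measurable[OF assms, measurable]
  show "(\<lambda>\<omega>. ord_stat l I (\<lambda>i. Xs i \<omega>) / sample_sum \<omega>) \<in> borel_measurable M"
    by measurable
  show "AE \<omega> in M. norm (ord_stat l I (\<lambda>i. Xs i \<omega>) / sample_sum \<omega>) \<le> 1"
    using AE_ord_stat_bounds[OF assms] by eventually_elim auto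
qed

lemma set_integral_ord_stat_exceeds_exp_sample_sum:
  fixes z :: real
  assumes I: "I \<subseteq> {..<n}" "card I = m" and l: "1 \<le> l" "l \<le> m" and "0 < z"
    and integrable_t: "\<And>r. r \<in> {l..m} \<Longrightarrow>
      set_integrable lborel {0..} (\<lambda>t. laplace_tr M X z ^ r - trunc_laplace M X t z ^ r)"
  defines "g \<equiv> \<lambda>t. \<integral>\<omega>. of_bool (t < ord_stat l I (\<lambda>i. Xs i \<omega>)) * exp (- z * sample_sum \<omega>) \<partial>M"
  shows "set_integrable lborel {0..} g"
    and "(LBINT t:{0..}. g t) = (\<Sum>r=l..m. (-1)^(r-l) * real ((r-1) choose (l-1)) * real (m choose r)
          * ((LBINT t:{0..}. laplace_tr M X z ^ r - trunc_laplace M X t z ^ r) * laplace_tr M X z ^ (n - r)))"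
      (is "_ = ?rhs")
proof -
  have g_eq: "g = (\<lambda>t. \<Sum>r=l..m. (-1)^(r-l) * real ((r-1) choose (l-1)) * real (m choose r)
      * ((laplace_tr M X z ^ r - trunc_laplace M X t z ^ r) * laplace_tr M X z ^ (n - r)))"
    unfolding g_def using integral_ord_stat_exceeds_exp_sample_sum(2)[OF I l \<open>0 < z\<close>] by simp
  have summands: "set_integrable lborel {0..} (\<lambda>t. (-1)^(r-l) * real ((r-1) choose (l-1)) * real (m choose r)
      * ((laplace_tr M X z ^ r - trunc_laplace M X t z ^ r) * laplace_tr M X z ^ (n - r)))" if "r \<in> {l..m}" for r
    using integrable_t[OF that] by (intro set_integrable_mult_right set_integrable_mult_left)
  show "set_integrable lborel {0..} g"
    unfolding g_eq by (rule set_integrable_sum) (rule summands)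
  have "(LBINT t:{0..}. g t) = (\<Sum>r=l..m. LBINT t:{0..}. (-1)^(r-l) * real ((r-1) choose (l-1)) * real (m choose r)
      * ((laplace_tr M X z ^ r - trunc_laplace M X t z ^ r) * laplace_tr M X z ^ (n - r)))"
    unfolding g_eq by (rule set_integral_sum) (rule summands)
  then show "(LBINT t:{0..}. g t) = ?rhs"
    by simp
qed

lemma integral_ord_stat_divide_sample_sum_eq_iterated:
  fixes I :: "nat set" and l :: nat
  defines "g \<equiv> \<lambda>t z. \<integral>\<omega>. of_bool (t < ord_stat l I (\<lambda>i. Xs i \<omega>)) * exp (- z * sample_sum \<omega>) \<partial>M"
  assumes I: "I \<subseteq> {..<n}" and l: "1 \<le> l" "l \<le> card I"
    and integrable_t: "\<And>z. 0 < z \<Longrightarrow> set_integrable lborel {0..} (\<lambda>t. g t z)"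
    and integrable_z: "set_integrable lborel {0<..} (\<lambda>z. LBINT t:{0..}. g t z)"
  shows "(\<integral>\<omega>. ord_stat l I (\<lambda>i. Xs i \<omega>) / sample_sum \<omega> \<partial>M) = (LBINT z:{0<..}. LBINT t:{0..}. g t z)"
proof -
  define Y where "Y \<omega> = ord_stat l I (\<lambda>i. Xs i \<omega>)" for \<omega>
  note Y_measurable [measurable] = ord_stat_Xs_measurable[OF I l, folded Y_def]
  have "AE \<omega> in M. 0 < Y \<omega> \<and> Y \<omega> \<le> sample_sum \<omega>"
    unfolding Y_def using AE_ord_stat_bounds[OF I l] .
  then have Y_S: "AE \<omega> in M. 0 \<le> Y \<omega> \<and> 0 < sample_sum \<omega>"
    by eventually_elim auto
  have "(\<integral>\<^sup>+\<omega>. ennreal (Y \<omega> / sample_sum \<omega>) \<partial>M)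
      = (\<integral>\<^sup>+z. \<integral>\<^sup>+t. \<integral>\<^sup>+\<omega>. ennreal (indicator {0<..} z * indicator {0..} t * of_bool (t < Y \<omega>)
          * exp (- z * sample_sum \<omega>)) \<partial>M \<partial>lborel \<partial>lborel)"
    by (rule nn_integral_divide_eq_iterated[OF Y_measurable sample_sum_measurable Y_S])
  also have "\<dots> = (\<integral>\<^sup>+z. \<integral>\<^sup>+t. ennreal (indicator {0<..} z * (indicator {0..} t * g t z)) \<partial>lborel \<partial>lborel)"
  proof (intro nn_integral_cong)
    fix z t :: real
    show "(\<integral>\<^sup>+\<omega>. ennreal (indicator {0<..} z * indicator {0..} t * of_bool (t < Y \<omega>) * exp (- z * sample_sum \<omega>)) \<partial>M)
        = ennreal (indicator {0<..} z * (indicator {0..} t * g t z))"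
    proof (cases "0 < z")
      case True
      then show ?thesis
        using integral_ord_stat_exceeds_exp_sample_sum(1)[OF I refl l True, of t]
        by (subst nn_integral_eq_integral) (auto simp: g_def Y_def indicator_def mult.assoc)
    qed (simp add: indicator_def)
  qed
  also have "\<dots> = ennreal (LBINT z:{0<..}. LBINT t:{0..}. g t z)"
    using integrable_t integrable_z unfolding g_def
    by (intro nn_integral_iterated_eq_set_integral) (auto intro: integral_nonneg_AE)
  finally have "(\<integral>\<^sup>+\<omega>. ennreal (Y \<omega> / sample_sum \<omega>) \<partial>M) = ennreal (LBINT z:{0<..}. LBINT t:{0..}. g t z)" .
  moreover have "0 \<le> (LBINT z:{0<..}. LBINT t:{0..}. g t z)"
    unfolding g_def set_lebesgue_integral_def
    by (intro integral_nonneg_AE AE_I2) (auto simp: indicator_def intro: integral_nonneg_AE)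
  moreover have "AE \<omega> in M. 0 \<le> Y \<omega> / sample_sum \<omega>"
    using Y_S by eventually_elim auto
  ultimately show ?thesis
    unfolding Y_def[symmetric] by (subst integral_eq_nn_integral) auto
qed

lemma integral_ord_stat_divide_sample_sum:
  assumes I: "I \<subseteq> {..<n}" "card I = m" and l: "1 \<le> l" "l \<le> m"
    and integrable_t: "\<And>r z. r \<in> {l..m} \<Longrightarrow> 0 < z \<Longrightarrow>
      set_integrable lborel {0..} (\<lambda>t. laplace_tr M X z ^ r - trunc_laplace M X t z ^ r)"
    and integrable_z: "\<And>r. r \<in> {l..m} \<Longrightarrow>
      set_integrable lborel {0<..} (\<lambda>z. (LBINT t:{0..}. laplace_tr M X z ^ r - trunc_laplace M X t z ^ r)
        * laplace_tr M X z ^ (n - r))"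
  shows "(\<integral>\<omega>. ord_stat l I (\<lambda>i. Xs i \<omega>) / sample_sum \<omega> \<partial>M)
       = (\<Sum>r=l..m. (-1)^(r-l) * real ((r-1) choose (l-1)) * real (m choose r) *
           (LBINT z:{0<..}. (LBINT t:{0..}. laplace_tr M X z ^ r - trunc_laplace M X t z ^ r)
             * laplace_tr M X z ^ (n - r)))" (is "_ = ?rhs")
proof -
  define g where "g t z = (\<integral>\<omega>. of_bool (t < ord_stat l I (\<lambda>i. Xs i \<omega>)) * exp (- z * sample_sum \<omega>) \<partial>M)"
    for t z
  define h where "h z = (\<Sum>r=l..m. (-1)^(r-l) * real ((r-1) choose (l-1)) * real (m choose r)
      * ((LBINT t:{0..}. laplace_tr M X z ^ r - trunc_laplace M X t z ^ r) * laplace_tr M X z ^ (n - r)))" for z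
  have g_t: "set_integrable lborel {0..} (\<lambda>t. g t z)" "(LBINT t:{0..}. g t z) = h z" if "0 < z" for z
    using set_integral_ord_stat_exceeds_exp_sample_sum[OF I l that integrable_t[OF _ that]]
    unfolding g_def h_def by auto
  have summands: "set_integrable lborel {0<..} (\<lambda>z. (-1)^(r-l) * real ((r-1) choose (l-1)) * real (m choose r)
      * ((LBINT t:{0..}. laplace_tr M X z ^ r - trunc_laplace M X t z ^ r) * laplace_tr M X z ^ (n - r)))"
    if "r \<in> {l..m}" for r
    using integrable_z[OF that] by (rule set_integrable_mult_right)
  have "set_integrable lborel {0<..} h"
    unfolding h_def by (rule set_integrable_sum) (rule summands)
  then have h_integrable: "set_integrable lborel {0<..} (\<lambda>z. LBINT t:{0..}. g t z)"
    by (subst set_integrable_cong[OF refl refl]) (auto simp: g_t)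
  have "(\<integral>\<omega>. ord_stat l I (\<lambda>i. Xs i \<omega>) / sample_sum \<omega> \<partial>M) = (LBINT z:{0<..}. LBINT t:{0..}. g t z)"
    using I l g_t(1) h_integrable unfolding g_def
    by (intro integral_ord_stat_divide_sample_sum_eq_iterated) auto
  also have "\<dots> = (LBINT z:{0<..}. h z)"
    by (rule set_lebesgue_integral_cong) (auto simp: g_t)
  also have "\<dots> = (\<Sum>r=l..m. LBINT z:{0<..}. (-1)^(r-l) * real ((r-1) choose (l-1)) * real (m choose r)
      * ((LBINT t:{0..}. laplace_tr M X z ^ r - trunc_laplace M X t z ^ r) * laplace_tr M X z ^ (n - r)))"
    unfolding h_def by (rule set_integral_sum) (rule summands)
  also have "\<dots> = ?rhs"
    by simp
  finally show ?thesis .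
qed

end

theorem theorem1:
  fixes M :: "'a measure" and X :: "'a \<Rightarrow> real" and Xs :: "nat \<Rightarrow> 'a \<Rightarrow> real"
    and n m j k :: nat
  assumes "prob_space M"
    and "X \<in> borel_measurable M"
    and "AE \<omega> in M. X \<omega> \<ge> 0"
    and "absolutely_continuous lborel (distr M borel X)"
    and "integrable M X" and "(\<integral>\<omega>. X \<omega> \<partial>M) > 0"
    and "2 \<le> m" and "m \<le> n"
    and "\<And>i. i < n \<Longrightarrow> Xs i \<in> borel_measurable M"
    and "\<And>i. i < n \<Longrightarrow> distr M borel (Xs i) = distr M borel X"
    and "prob_space.indep_vars M (\<lambda>_. borel) Xs {..<n}"
    and "1 \<le> j" and "j \<le> k" and "k \<le> m"
    and "integrable M (\<lambda>\<omega>. IG_hat n m j k (\<lambda>i. Xs i \<omega>))"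
    and "\<And>r z. r \<in> {j..m} \<Longrightarrow> z > 0 \<Longrightarrow>
           set_integrable lborel {0..}
             (\<lambda>t. laplace_tr M X z ^ r - trunc_laplace M X t z ^ r)"
    and "\<And>r. r \<in> {j..m} \<Longrightarrow>
           set_integrable lborel {0<..}
             (\<lambda>z. (LBINT t:{0..}. laplace_tr M X z ^ r - trunc_laplace M X t z ^ r)
                   * laplace_tr M X z ^ (n - r))"
  shows "(\<integral>\<omega>. IG_hat n m j k (\<lambda>i. Xs i \<omega>) \<partial>M) =
     real n / real m * (\<Sum>r=k..m. (-1::real) ^ (r - k) * real ((r - 1) choose (k - 1))
        * real (m choose r) *
        (LBINT z:{0<..}. (LBINT t:{0..}. laplace_tr M X z ^ r - trunc_laplace M X t z ^ r)
                   * laplace_tr M X z ^ (n - r)))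
   - real n / real m * (\<Sum>s=j..m. (-1::real) ^ (s - j) * real ((s - 1) choose (j - 1))
        * real (m choose s) *
        (LBINT z:{0<..}. (LBINT t:{0..}. laplace_tr M X z ^ s - trunc_laplace M X t z ^ s)
                   * laplace_tr M X z ^ (n - s)))"
proof -
  interpret positive_iid_sample M X Xs n
    using assms(1-4,9-11) AE_pos_if_absolutely_continuous[OF assms(2-4)]
    by (intro positive_iid_sample.intro positive_iid_sample_axioms.intro) auto
  define \<I> where "\<I> = {I. I \<subseteq> {..<n} \<and> card I = m}"
  define E where "E l = (\<Sum>r=l..m. (-1::real) ^ (r - l) * real ((r - 1) choose (l - 1)) * real (m choose r) *
        (LBINT z:{0<..}. (LBINT t:{0..}. laplace_tr M X z ^ r - trunc_laplace M X t z ^ r)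
                   * laplace_tr M X z ^ (n - r)))" for l
  have ratio: "integrable M (\<lambda>\<omega>. ord_stat l I (\<lambda>i. Xs i \<omega>) / sample_sum \<omega>)"
      "(\<integral>\<omega>. ord_stat l I (\<lambda>i. Xs i \<omega>) / sample_sum \<omega> \<partial>M) = E l"
    if "I \<in> \<I>" "l \<in> {j, k}" for I l
  proof -
    have l: "1 \<le> l" "j \<le> l" "l \<le> m" and I: "I \<subseteq> {..<n}" "card I = m"
      using that assms(12-14) by (auto simp: \<I>_def)
    show "integrable M (\<lambda>\<omega>. ord_stat l I (\<lambda>i. Xs i \<omega>) / sample_sum \<omega>)"
      using I l by (intro integrable_ord_stat_divide_sample_sum) auto
    show "(\<integral>\<omega>. ord_stat l I (\<lambda>i. Xs i \<omega>) / sample_sum \<omega> \<partial>M) = E l"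
      unfolding E_def using I l assms(16,17) by (intro integral_ord_stat_divide_sample_sum) auto
  qed
  have IG_eq: "IG_hat n m j k (\<lambda>i. Xs i \<omega>) = fact (m - 1) / (\<Prod>i=1..m-1. real (n - i)) *
      (\<Sum>I\<in>\<I>. ord_stat k I (\<lambda>i. Xs i \<omega>) / sample_sum \<omega> - ord_stat j I (\<lambda>i. Xs i \<omega>) / sample_sum \<omega>)" for \<omega>
    unfolding IG_hat_def \<I>_def sample_sum_def by (simp add: sum_divide_distrib diff_divide_distrib)
  have "(\<integral>\<omega>. IG_hat n m j k (\<lambda>i. Xs i \<omega>) \<partial>M)
      = fact (m - 1) / (\<Prod>i=1..m-1. real (n - i)) * (\<Sum>I\<in>\<I>. E k - E j)"
    unfolding IG_eq using ratio by (simp add: Bochner_Integration.integral_sum)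
  also have "\<dots> = fact (m - 1) / (\<Prod>i=1..m-1. real (n - i)) * real (n choose m) * (E k - E j)"
    using n_subsets[of "{..<n}" m] by (simp add: \<I>_def)
  also have "\<dots> = real n / real m * E k - real n / real m * E j"
    using fact_div_prod_times_choose[of m n] assms(7,8) by (simp add: right_diff_distrib)
  finally show ?thesis
    unfolding E_def .
qed

end
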